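(* Let $p\in(0,1)$, $\mu_p=(1-p)\delta_{-1}+p\delta_1$, $h_0=2p-1$, $\mathcal{U}$ the uniform measure on $[-1,1]$, $I_p(x)=\frac{1+x}{2}\log\frac{1+x}{2p}+\frac{1-x}{2}\log\frac{1-x}{2(1-p)}$ for $x\in[-1,1]$, and $w_p(x,u)=2|I_p'(u)|\mathbf{1}_{x(h_0-u)<0}$ for $x\in\{-1,1\}$, $u\in[-1,1]$. Then for every probability measure $\nu$ on $\{-1,1\}$, $$\mathcal{W}_{w_p}(\nu,\mathcal{U})=H(\nu|\mu_p).$$
   Context: $\mathcal{W}_c(\nu,\tilde\mu)=\inf_\pi\int c\,d\pi$ over couplings $\pi$ of $\nu$ and $\tilde\mu$; $H$ is relative entropy. *)

theory Defs
  imports "HOL-Probability.Probability"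
begin

definition mu_p :: "real \<Rightarrow> real measure" where
  "mu_p p = distr (measure_pmf (bernoulli_pmf p)) borel (\<lambda>b. if b then 1 else -1)"

definition unifU :: "real measure" where
  "unifU = uniform_measure lborel {-1..1}"

definition I_p :: "real \<Rightarrow> real \<Rightarrow> real" where
  "I_p p x = (1 + x) / 2 * ln ((1 + x) / (2 * p)) + (1 - x) / 2 * ln ((1 - x) / (2 * (1 - p)))"

definition w_p :: "real \<Rightarrow> real \<Rightarrow> real \<Rightarrow> ennreal" where
  "w_p p x u = ennreal (2 * \<bar>deriv (I_p p) u\<bar> * (if x * ((2 * p - 1) - u) < 0 then 1 else 0))"

definition couplings :: "real measure \<Rightarrow> real measure \<Rightarrow> (real \<times> real) measure set" where
  "couplings \<nu> \<mu> = {\<pi>. prob_space \<pi> \<and> sets \<pi> = sets (borel :: (real \<times> real) measure)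
      \<and> distr \<pi> borel fst = \<nu> \<and> distr \<pi> borel snd = \<mu>}"

definition transport_cost :: "(real \<Rightarrow> real \<Rightarrow> ennreal) \<Rightarrow> real measure \<Rightarrow> real measure \<Rightarrow> ennreal" where
  "transport_cost c \<nu> \<mu> = (INF \<pi> \<in> couplings \<nu> \<mu>. \<integral>\<^sup>+ z. c (fst z) (snd z) \<partial>\<pi>)"

definition rel_entropy :: "real measure \<Rightarrow> real measure \<Rightarrow> real" where
  "rel_entropy \<nu> \<mu> = KL_divergence (exp 1) \<mu> \<nu>"

end

theory Submission
  imports Defs "HOL-Real_Asymp.Real_Asymp"
begin

text \<open>
  Write \<open>q = \<nu>{1}\<close> and \<open>a = 2q - 1\<close>, so that \<open>\<nu> = mu_p q\<close> and \<open>H(\<nu> | mu_p p) = I_p(a)\<close>.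
  The cost charges \<open>2 |I_p'(u)|\<close> exactly when \<open>u\<close> lies on the side of \<open>h = 2p - 1\<close>
  opposite to \<open>x\<close>. The monotone coupling (\<open>x = 1\<close> for \<open>u < a\<close>, \<open>x = -1\<close> for \<open>u \<ge> a\<close>)
  is charged only for \<open>u\<close> between \<open>a\<close> and \<open>h\<close>, which costs \<open>\<integral> |I_p'|\<close> over that interval,
  i.e. \<open>I_p(a)\<close> because \<open>I_p(h) = 0\<close>. Conversely, for \<open>a < b < h\<close> the potentials
  \<open>K 1{x = -1}\<close>, \<open>2|I_p'| 1[b,h]\<close> and \<open>K 1[b,\<infinity>)\<close> with \<open>K = 2|I_p'(b)|\<close> satisfy a
  pointwise dual inequality, because \<open>|I_p'|\<close> decreases on \<open>[-1,h]\<close>; integrating it against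
  any coupling gives \<open>I_p(b) \<le> cost\<close>, and \<open>b \<rightarrow> a\<close> gives the lower bound. The case
  \<open>a > h\<close> follows from the symmetry \<open>(x, u, p) \<mapsto> (-x, -u, 1 - p)\<close>.
\<close>

section \<open>The rate function\<close>

definition I_p_deriv :: "real \<Rightarrow> real \<Rightarrow> real" where
  "I_p_deriv p u = (ln ((1 + u) / (2 * p)) - ln ((1 - u) / (2 * (1 - p)))) / 2"

lemma I_p_deriv_measurable [measurable]: "I_p_deriv p \<in> borel_measurable borel"
  unfolding I_p_deriv_def[abs_def] by measurable

lemma has_real_derivative_I_p:
  assumes "0 < p" "p < 1" "-1 < u" "u < 1"
  shows "(I_p p has_real_derivative I_p_deriv p u) (at u)"
proof -
  have "((\<lambda>x. (1 + x) / 2 * ln ((1 + x) / (2 * p))) has_real_derivative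
      ln ((1 + u) / (2 * p)) / 2 + 1 / 2) (at u)"
    using assms by (auto intro!: derivative_eq_intros simp: field_simps)
  moreover have "((\<lambda>x. (1 - x) / 2 * ln ((1 - x) / (2 * (1 - p)))) has_real_derivative
      - ln ((1 - u) / (2 * (1 - p))) / 2 - 1 / 2) (at u)"
    using assms by (auto intro!: derivative_eq_intros simp: divide_simps) (simp add: algebra_simps)
  ultimately show ?thesis
    unfolding I_p_def[abs_def] I_p_deriv_def by (auto dest: DERIV_add simp: diff_divide_distrib)
qed

lemma deriv_I_p: "0 < p \<Longrightarrow> p < 1 \<Longrightarrow> -1 < u \<Longrightarrow> u < 1 \<Longrightarrow> deriv (I_p p) u = I_p_deriv p u"
  using has_real_derivative_I_p DERIV_imp_deriv by blast

lemma continuous_on_mult_ln_div: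
  assumes "0 < c"
  shows "continuous_on {0..} (\<lambda>t::real. t * ln (t / c))"
proof -
  have "continuous (at t within {0..}) (\<lambda>t::real. t * ln (t / c))" if "t \<ge> 0" for t
  proof (cases "t = 0")
    case True
    have "((\<lambda>t::real. t * ln t - t * ln c) \<longlongrightarrow> 0) (at_right 0)"
      by real_asymp
    moreover have "\<forall>\<^sub>F t in at_right 0. t * ln t - t * ln c = t * ln (t / c)"
      using assms by (auto simp: eventually_at_right_field ln_div algebra_simps intro!: exI[of _ 1])
    ultimately have "((\<lambda>t::real. t * ln (t / c)) \<longlongrightarrow> 0) (at_right 0)"
      using tendsto_cong by fastforce
    then show ?thesis
      using True by (simp add: continuous_within at_within_Ici_at_right)
  next
    case False
    then have "isCont (\<lambda>t. t * ln (t / c)) t"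
      using that assms by (intro continuous_intros) auto
    then show ?thesis
      by (rule continuous_at_imp_continuous_within)
  qed
  then show ?thesis
    by (simp add: continuous_on_eq_continuous_within)
qed

lemma continuous_on_I_p:
  assumes "0 < p" "p < 1"
  shows "continuous_on {-1..1} (I_p p)"
proof -
  have I_p_eq: "I_p p = (\<lambda>x. (\<lambda>t. t * ln (t / p)) ((1 + x) / 2)
                          + (\<lambda>t. t * ln (t / (1 - p))) ((1 - x) / 2))"
    by (simp add: I_p_def fun_eq_iff field_simps)
  show ?thesis
    unfolding I_p_eq using assms
    by (intro continuous_on_add continuous_on_compose2[OF continuous_on_mult_ln_div]
              continuous_intros) auto
qed

lemma I_p_center: "I_p p (2 * p - 1) = 0"
  by (simp add: I_p_def)

lemma I_p_deriv_center: "I_p_deriv p (2 * p - 1) = 0"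
  by (simp add: I_p_deriv_def)

lemma I_p_uminus: "I_p (1 - p) (- x) = I_p p x"
  by (simp add: I_p_def algebra_simps)

lemma I_p_deriv_uminus: "I_p_deriv (1 - p) (- u) = - I_p_deriv p u"
  by (simp add: I_p_deriv_def field_simps)

lemma I_p_deriv_mono:
  assumes "0 < p" "p < 1" "-1 < u" "u \<le> v" "v < 1"
  shows "I_p_deriv p u \<le> I_p_deriv p v"
proof -
  have "ln ((1 + u) / (2 * p)) \<le> ln ((1 + v) / (2 * p))"
    using assms by (subst ln_le_cancel_iff) (auto simp: divide_right_mono)
  moreover have "ln ((1 - v) / (2 * (1 - p))) \<le> ln ((1 - u) / (2 * (1 - p)))"
    using assms by (subst ln_le_cancel_iff) (auto simp: divide_right_mono)
  ultimately show ?thesis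
    unfolding I_p_deriv_def by simp
qed

text \<open>At the endpoints \<open>u = -1\<close> and \<open>u = 1\<close> the sign lemmas rely on the junk value \<open>ln 0 = 0\<close>.\<close>

lemma I_p_deriv_nonpos:
  assumes "0 < p" "p < 1" "-1 \<le> u" "u \<le> 2 * p - 1"
  shows "I_p_deriv p u \<le> 0"
proof (cases "u = -1")
  case True
  then show ?thesis
    using assms by (simp add: I_p_deriv_def)
next
  case False
  then show ?thesis
    using I_p_deriv_mono[of p u "2 * p - 1"] I_p_deriv_center[of p] assms by auto
qed

lemma I_p_deriv_nonneg:
  assumes "0 < p" "p < 1" "2 * p - 1 \<le> u" "u \<le> 1"
  shows "0 \<le> I_p_deriv p u"
proof (cases "u = 1")
  case True
  then show ?thesis
    using assms by (simp add: I_p_deriv_def)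
next
  case False
  then show ?thesis
    using I_p_deriv_mono[of p "2 * p - 1" u] I_p_deriv_center[of p] assms by auto
qed

lemma abs_I_p_deriv_antimono:
  assumes "0 < p" "p < 1" "-1 < u" "u \<le> v" "v \<le> 2 * p - 1"
  shows "\<bar>I_p_deriv p v\<bar> \<le> \<bar>I_p_deriv p u\<bar>"
  using I_p_deriv_mono[of p u v] I_p_deriv_nonpos[of p u] I_p_deriv_nonpos[of p v] assms by auto

lemma nn_integral_FTC_Icc_interior:
  fixes f f' :: "real \<Rightarrow> real"
  assumes "a \<le> b" "continuous_on {a..b} f" "f' \<in> borel_measurable borel"
    and "\<And>x. x \<in> {a<..<b} \<Longrightarrow> (f has_real_derivative f' x) (at x)"
    and "\<And>x. x \<in> {a..b} \<Longrightarrow> 0 \<le> f' x"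
  shows "(\<integral>\<^sup>+x. ennreal (f' x * indicator {a..b} x) \<partial>lborel) = ennreal (f b - f a)"
proof -
  have "(f' has_integral f b - f a) {a..b}"
    using assms
    by (intro fundamental_theorem_of_calculus_interior)
       (auto simp: has_real_derivative_iff_has_vector_derivative[symmetric])
  then have "((\<lambda>x. if x \<in> {a..b} then f' x else 0) has_integral f b - f a) UNIV"
    by (simp only: has_integral_restrict_UNIV)
  moreover have "(\<lambda>x. if x \<in> {a..b} then f' x else 0) = (\<lambda>x. f' x * indicator {a..b} x)"
    by (auto simp: fun_eq_iff)
  ultimately have "((\<lambda>x. f' x * indicator {a..b} x) has_integral f b - f a) UNIV"
    by simp
  then show ?thesis
    using assms by (intro nn_integral_has_integral_lborel) (auto simp: indicator_def)
qed

lemma nn_integral_abs_I_p_deriv: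
  assumes p: "0 < p" "p < 1" and a: "-1 \<le> a" "a \<le> 1"
  shows "(\<integral>\<^sup>+u. ennreal (\<bar>I_p_deriv p u\<bar> * indicator {min a (2 * p - 1)..max a (2 * p - 1)} u) \<partial>lborel)
    = ennreal (I_p p a)"
proof (cases "a \<le> 2 * p - 1")
  case True
  have "(\<integral>\<^sup>+u. ennreal (\<bar>I_p_deriv p u\<bar> * indicator {a..2 * p - 1} u) \<partial>lborel)
      = (\<integral>\<^sup>+u. ennreal (- I_p_deriv p u * indicator {a..2 * p - 1} u) \<partial>lborel)"
    using I_p_deriv_nonpos[OF p] a by (intro nn_integral_cong) (auto simp: indicator_def)
  also have "\<dots> = ennreal (- I_p p (2 * p - 1) - - I_p p a)"
    using True p a I_p_deriv_nonpos[OF p]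
    by (intro nn_integral_FTC_Icc_interior continuous_on_minus continuous_on_subset[OF continuous_on_I_p]
              DERIV_minus has_real_derivative_I_p) auto
  finally show ?thesis
    using True by (simp add: I_p_center)
next
  case False
  have "(\<integral>\<^sup>+u. ennreal (\<bar>I_p_deriv p u\<bar> * indicator {2 * p - 1..a} u) \<partial>lborel)
      = (\<integral>\<^sup>+u. ennreal (I_p_deriv p u * indicator {2 * p - 1..a} u) \<partial>lborel)"
    using I_p_deriv_nonneg[OF p] a by (intro nn_integral_cong) (auto simp: indicator_def)
  also have "\<dots> = ennreal (I_p p a - I_p p (2 * p - 1))"
    using False p a I_p_deriv_nonneg[OF p]
    by (intro nn_integral_FTC_Icc_interior continuous_on_subset[OF continuous_on_I_p]
              has_real_derivative_I_p) auto
  finally show ?thesis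
    using False by (simp add: I_p_center)
qed

section \<open>The two-point measures and the uniform measure\<close>

lemma sets_mu_p [simp, measurable_cong]: "sets (mu_p q) = sets borel"
  by (simp add: mu_p_def)

lemma prob_space_mu_p: "prob_space (mu_p q)"
  unfolding mu_p_def by (intro prob_space.prob_space_distr prob_space_measure_pmf) simp

lemma nn_integral_mu_p:
  assumes "0 \<le> q" "q \<le> 1" "f \<in> borel_measurable borel"
  shows "(\<integral>\<^sup>+x. f x \<partial>mu_p q) = f 1 * ennreal q + f (-1) * ennreal (1 - q)"
  using assms unfolding mu_p_def by (simp add: nn_integral_distr)

lemma integral_mu_p:
  assumes "0 \<le> q" "q \<le> 1" "f \<in> borel_measurable borel"
  shows "(\<integral>x. f x \<partial>mu_p q) = f 1 * q + f (-1) * (1 - q)"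
  using assms unfolding mu_p_def by (simp add: integral_distr)

lemma emeasure_mu_p:
  assumes "0 \<le> q" "q \<le> 1" "A \<in> sets borel"
  shows "emeasure (mu_p q) A = ennreal (q * indicator A 1 + (1 - q) * indicator A (-1))"
proof -
  have "emeasure (mu_p q) A = indicator A 1 * ennreal q + indicator A (-1) * ennreal (1 - q)"
    using assms nn_integral_mu_p[OF assms(1,2), of "indicator A"] by simp
  also have "\<dots> = ennreal (q * indicator A 1 + (1 - q) * indicator A (-1))"
    using assms by (simp add: indicator_def)
  finally show ?thesis .
qed

lemma AE_mu_p:
  assumes "0 \<le> q" "q \<le> 1"
  shows "AE x in mu_p q. x \<in> {-1, 1}"
  using assms unfolding mu_p_def by (subst AE_distr_iff) auto

lemma measure_eq_mu_p:
  assumes "prob_space \<nu>" "sets \<nu> = sets borel" "emeasure \<nu> {-1, 1} = 1"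
  shows "\<nu> = mu_p (measure \<nu> {1})"
proof -
  interpret prob_space \<nu> by fact
  define q where "q = measure \<nu> {1}"
  have q: "0 \<le> q" "q \<le> 1"
    by (auto simp: q_def)
  have "measure \<nu> {-1, 1} = 1"
    using assms(3) by (simp add: measure_def)
  then have q_neg: "measure \<nu> {-1} = 1 - q"
    using finite_measure_Union[of "{-1}" "{1}"] assms(2) by (simp add: q_def insert_commute)
  have AE_nu: "AE x in \<nu>. x \<in> {-1, 1}"
    using assms by (subst AE_in_set_eq_1) (auto simp: measure_def)
  have "\<nu> = mu_p q"
  proof (rule measure_eqI)
    show "sets \<nu> = sets (mu_p q)"
      using assms(2) by simp
    fix A assume "A \<in> sets \<nu>"
    then have A: "A \<in> sets borel"
      using assms(2) by simp
    have "measure \<nu> A = measure \<nu> (A \<inter> {-1, 1})"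
      using A AE_nu assms(2) by (intro measure_eq_AE) auto
    also have "\<dots> = (\<Sum>x\<in>A \<inter> {-1, 1}. measure \<nu> {x})"
      using assms(2) by (intro finite_measure_eq_sum_singleton) auto
    also have "\<dots> = q * indicator A 1 + (1 - q) * indicator A (-1)"
      by (cases "1 \<in> A"; cases "-1 \<in> A") (simp_all add: q_neg q_def Int_insert_right)
    finally show "emeasure \<nu> A = emeasure (mu_p q) A"
      using q A by (simp add: emeasure_eq_measure emeasure_mu_p)
  qed
  then show ?thesis
    unfolding q_def .
qed

lemma rel_entropy_mu_p:
  assumes p: "0 < p" "p < 1" and q: "0 \<le> q" "q \<le> 1"
  shows "rel_entropy (mu_p q) (mu_p p) = I_p p (2 * q - 1)"
proof -
  define D where "D x = (if x = 1 then q / p else (1 - q) / (1 - p))" for x :: real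
  have D_measurable [measurable]: "D \<in> borel_measurable borel"
    unfolding D_def by measurable
  have D_nonneg: "0 \<le> D x" for x
    using p q by (simp add: D_def)
  have density_eq: "mu_p q = density (mu_p p) D"
  proof (rule measure_eqI)
    fix A assume "A \<in> sets (mu_p q)"
    then have A: "A \<in> sets borel"
      by simp
    have "emeasure (density (mu_p p) D) A = (\<integral>\<^sup>+x. ennreal (D x) * indicator A x \<partial>mu_p p)"
      using A by (simp add: emeasure_density)
    also have "\<dots> = emeasure (mu_p q) A"
      using p q A by (simp add: nn_integral_mu_p emeasure_mu_p D_def indicator_def ennreal_mult[symmetric])
    finally show "emeasure (mu_p q) A = emeasure (density (mu_p p) D) A" ..
  qed simp
  have "rel_entropy (mu_p q) (mu_p p) = (\<integral>x. D x * log (exp 1) (D x) \<partial>mu_p p)"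
    unfolding rel_entropy_def density_eq using D_nonneg prob_space_mu_p
    by (intro sigma_finite_measure.KL_density prob_space_imp_sigma_finite) auto
  also have "\<dots> = q * ln (q / p) + (1 - q) * ln ((1 - q) / (1 - p))"
    using p q by (simp add: integral_mu_p D_def log_def)
  also have "\<dots> = I_p p (2 * q - 1)"
  proof -
    have "(1 + (2 * q - 1)) / 2 = q" "(1 + (2 * q - 1)) / (2 * p) = q / p"
         "(1 - (2 * q - 1)) / 2 = 1 - q" "(1 - (2 * q - 1)) / (2 * (1 - p)) = (1 - q) / (1 - p)"
      using p by (auto simp: field_simps)
    then show ?thesis
      unfolding I_p_def by simp
  qed
  finally show ?thesis .
qed

lemma distr_mu_p_uminus:
  assumes "0 \<le> q" "q \<le> 1"
  shows "distr (mu_p q) borel uminus = mu_p (1 - q)"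
proof (rule measure_eqI)
  fix A :: "real set" assume "A \<in> sets (distr (mu_p q) borel uminus)"
  then have A: "A \<in> sets borel"
    by simp
  moreover have "uminus -` A \<in> sets borel"
    using measurable_sets_borel[of "uminus :: real \<Rightarrow> real" borel A] A by simp
  ultimately show "emeasure (distr (mu_p q) borel uminus) A = emeasure (mu_p (1 - q)) A"
    using assms by (simp add: emeasure_distr emeasure_mu_p indicator_def)
qed simp

lemma sets_unifU [simp, measurable_cong]: "sets unifU = sets borel"
  by (simp add: unifU_def)

lemma space_unifU [simp]: "space unifU = UNIV"
  by (simp add: unifU_def)

lemma prob_space_unifU: "prob_space unifU"
  unfolding unifU_def by (rule prob_space_uniform_measure) auto

lemma emeasure_unifU:
  assumes "A \<in> sets borel"
  shows "emeasure unifU A = emeasure lborel ({-1..1} \<inter> A) / 2"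
  using assms by (simp add: unifU_def)

lemma emeasure_unifU_lessThan:
  assumes "-1 \<le> c" "c \<le> 1"
  shows "emeasure unifU {..<c} = ennreal ((1 + c) / 2)"
proof -
  have "{-1..1} \<inter> {..<c} = {-1..<c}"
    using assms by auto
  then show ?thesis
    using assms divide_ennreal[of "1 + c" 2] by (simp add: emeasure_unifU add.commute)
qed

lemma emeasure_unifU_atLeast:
  assumes "-1 \<le> c" "c \<le> 1"
  shows "emeasure unifU {c..} = ennreal ((1 - c) / 2)"
proof -
  have "{-1..1} \<inter> {c..} = {c..1}"
    using assms by auto
  then show ?thesis
    using assms divide_ennreal[of "1 - c" 2] by (simp add: emeasure_unifU)
qed

lemma nn_integral_unifU:
  assumes "f \<in> borel_measurable borel"
  shows "(\<integral>\<^sup>+u. f u \<partial>unifU) = (\<integral>\<^sup>+u. f u * indicator {-1..1} u \<partial>lborel) / 2"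
  using assms unfolding unifU_def by (subst nn_integral_uniform_measure) auto

lemma AE_unifU_interior: "AE u in unifU. u \<in> {-1<..<1}"
  unfolding unifU_def
proof (rule AE_uniform_measureI)
  show "AE u in lborel. u \<in> {-1..1} \<longrightarrow> u \<in> {-1<..<1::real}"
    using AE_lborel_singleton[of "-1::real"] AE_lborel_singleton[of "1::real"]
    by eventually_elim auto
qed simp

lemma distr_unifU_uminus: "distr unifU borel uminus = unifU"
proof (rule measure_eqI)
  fix A :: "real set" assume "A \<in> sets (distr unifU borel uminus)"
  then have A: "A \<in> sets borel"
    by simp
  have "uminus -` A \<in> sets borel"
    using measurable_sets_borel[of "uminus :: real \<Rightarrow> real" borel A] A by simp
  moreover have "emeasure lborel ({-1..1} \<inter> uminus -` A) = emeasure (distr lborel borel uminus) ({-1..1} \<inter> A)"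
    using A by (subst emeasure_distr) (auto intro!: arg_cong[where f = "emeasure lborel"])
  ultimately show "emeasure (distr unifU borel uminus) A = emeasure unifU A"
    using A by (simp add: emeasure_distr emeasure_unifU lborel_distr_uminus)
qed simp

lemma nn_integral_unifU_abs_I_p_deriv:
  assumes p: "0 < p" "p < 1" and a: "-1 \<le> a" "a \<le> 1"
  shows "(\<integral>\<^sup>+u. ennreal (2 * \<bar>I_p_deriv p u\<bar> * indicator {min a (2 * p - 1)..max a (2 * p - 1)} u) \<partial>unifU)
    = ennreal (I_p p a)"
    (is "(\<integral>\<^sup>+u. ennreal (2 * _ * indicator ?S u) \<partial>unifU) = _")
proof -
  have "(\<integral>\<^sup>+u. ennreal (2 * \<bar>I_p_deriv p u\<bar> * indicator ?S u) \<partial>unifU)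
      = (\<integral>\<^sup>+u. ennreal (2 * \<bar>I_p_deriv p u\<bar> * indicator ?S u) * indicator {-1..1} u \<partial>lborel) / 2"
    by (rule nn_integral_unifU) measurable
  also have "(\<integral>\<^sup>+u. ennreal (2 * \<bar>I_p_deriv p u\<bar> * indicator ?S u) * indicator {-1..1} u \<partial>lborel)
      = (\<integral>\<^sup>+u. 2 * ennreal (\<bar>I_p_deriv p u\<bar> * indicator ?S u) \<partial>lborel)"
    using p a by (intro nn_integral_cong) (auto simp: indicator_def ennreal_mult)
  also have "\<dots> = 2 * ennreal (I_p p a)"
    using p a by (simp add: nn_integral_cmult nn_integral_abs_I_p_deriv)
  finally show ?thesis
    using mult_divide_eq_ennreal[of 2 "ennreal (I_p p a)"] by (simp add: mult.commute)
qed

section \<open>Couplings\<close>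

lemma measurable_fst_borel [measurable]: "fst \<in> borel_measurable (borel :: (real \<times> real) measure)"
  by (simp add: borel_prod[symmetric])

lemma measurable_snd_borel [measurable]: "snd \<in> borel_measurable (borel :: (real \<times> real) measure)"
  by (simp add: borel_prod[symmetric])

lemma measurable_reflect_borel [measurable]:
  "(\<lambda>(x, u). (- x, - u)) \<in> borel_measurable (borel :: (real \<times> real) measure)"
  by (simp add: borel_prod[symmetric])

lemma couplingsD:
  assumes "\<pi> \<in> couplings \<nu> \<mu>"
  shows "prob_space \<pi>" "sets \<pi> = sets borel" "distr \<pi> borel fst = \<nu>" "distr \<pi> borel snd = \<mu>"
    and "measurable \<pi> M = measurable borel M"
    and "fst \<in> measurable \<pi> borel" "snd \<in> measurable \<pi> borel"
  using assms unfolding couplings_def by (auto intro: measurable_cong_sets)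

lemma nn_integral_couplings_fst:
  assumes "\<pi> \<in> couplings \<nu> \<mu>" "f \<in> borel_measurable borel"
  shows "(\<integral>\<^sup>+z. f (fst z) \<partial>\<pi>) = (\<integral>\<^sup>+x. f x \<partial>\<nu>)"
proof -
  have "(\<integral>\<^sup>+x. f x \<partial>\<nu>) = (\<integral>\<^sup>+x. f x \<partial>distr \<pi> borel fst)"
    using couplingsD(3)[OF assms(1)] by simp
  also have "\<dots> = (\<integral>\<^sup>+z. f (fst z) \<partial>\<pi>)"
    using assms(2) by (intro nn_integral_distr couplingsD(6)[OF assms(1)]) simp
  finally show ?thesis ..
qed

lemma nn_integral_couplings_snd:
  assumes "\<pi> \<in> couplings \<nu> \<mu>" "f \<in> borel_measurable borel"
  shows "(\<integral>\<^sup>+z. f (snd z) \<partial>\<pi>) = (\<integral>\<^sup>+u. f u \<partial>\<mu>)"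
proof -
  have "(\<integral>\<^sup>+u. f u \<partial>\<mu>) = (\<integral>\<^sup>+u. f u \<partial>distr \<pi> borel snd)"
    using couplingsD(4)[OF assms(1)] by simp
  also have "\<dots> = (\<integral>\<^sup>+z. f (snd z) \<partial>\<pi>)"
    using assms(2) by (intro nn_integral_distr couplingsD(7)[OF assms(1)]) simp
  finally show ?thesis ..
qed

lemma AE_couplings_fst:
  assumes "\<pi> \<in> couplings \<nu> \<mu>" "AE x in \<nu>. P x"
  shows "AE z in \<pi>. P (fst z)"
proof (rule AE_distrD[OF couplingsD(6)[OF assms(1)]])
  show "AE x in distr \<pi> borel fst. P x"
    unfolding couplingsD(3)[OF assms(1)] by (rule assms(2))
qed

lemma AE_couplings_snd:
  assumes "\<pi> \<in> couplings \<nu> \<mu>" "AE u in \<mu>. P u"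
  shows "AE z in \<pi>. P (snd z)"
proof (rule AE_distrD[OF couplingsD(7)[OF assms(1)]])
  show "AE u in distr \<pi> borel snd. P u"
    unfolding couplingsD(4)[OF assms(1)] by (rule assms(2))
qed

lemma couplings_dual_le:
  assumes \<pi>: "\<pi> \<in> couplings \<nu> \<mu>" and S: "AE x in \<nu>. x \<in> S" and T: "AE u in \<mu>. u \<in> T"
    and [measurable]: "\<phi> \<in> borel_measurable borel" "\<psi> \<in> borel_measurable borel"
      "\<eta> \<in> borel_measurable borel" "(\<lambda>z. c (fst z) (snd z)) \<in> borel_measurable borel"
    and le: "\<And>x u. x \<in> S \<Longrightarrow> u \<in> T \<Longrightarrow> \<phi> x + \<psi> u \<le> c x u + \<eta> u"
  shows "(\<integral>\<^sup>+x. \<phi> x \<partial>\<nu>) + (\<integral>\<^sup>+u. \<psi> u \<partial>\<mu>)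
    \<le> (\<integral>\<^sup>+z. c (fst z) (snd z) \<partial>\<pi>) + (\<integral>\<^sup>+u. \<eta> u \<partial>\<mu>)"
proof -
  have [measurable]: "(\<lambda>z. \<phi> (fst z)) \<in> borel_measurable \<pi>" "(\<lambda>z. \<psi> (snd z)) \<in> borel_measurable \<pi>"
    "(\<lambda>z. \<eta> (snd z)) \<in> borel_measurable \<pi>" "(\<lambda>z. c (fst z) (snd z)) \<in> borel_measurable \<pi>"
    unfolding couplingsD(5)[OF \<pi>] by simp_all
  have "(\<integral>\<^sup>+x. \<phi> x \<partial>\<nu>) + (\<integral>\<^sup>+u. \<psi> u \<partial>\<mu>) = (\<integral>\<^sup>+z. \<phi> (fst z) + \<psi> (snd z) \<partial>\<pi>)"
    using \<pi> by (simp add: nn_integral_add nn_integral_couplings_fst nn_integral_couplings_snd)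
  also have "\<dots> \<le> (\<integral>\<^sup>+z. c (fst z) (snd z) + \<eta> (snd z) \<partial>\<pi>)"
  proof (rule nn_integral_mono_AE)
    show "AE z in \<pi>. \<phi> (fst z) + \<psi> (snd z) \<le> c (fst z) (snd z) + \<eta> (snd z)"
      using AE_couplings_fst[OF \<pi> S] AE_couplings_snd[OF \<pi> T] by eventually_elim (rule le)
  qed
  also have "\<dots> = (\<integral>\<^sup>+z. c (fst z) (snd z) \<partial>\<pi>) + (\<integral>\<^sup>+u. \<eta> u \<partial>\<mu>)"
    using \<pi> by (simp add: nn_integral_add nn_integral_couplings_snd)
  finally show ?thesis .
qed

lemma couplings_uminus:
  assumes "\<pi> \<in> couplings \<nu> \<mu>"
  shows "distr \<pi> borel (\<lambda>(x, u). (- x, - u)) \<in> couplings (distr \<nu> borel uminus) (distr \<mu> borel uminus)"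
proof -
  note c = couplingsD[OF assms]
  define R :: "real \<times> real \<Rightarrow> real \<times> real" where "R = (\<lambda>(x, u). (- x, - u))"
  have [measurable]: "R \<in> measurable \<pi> borel" "fst \<in> measurable \<pi> borel" "snd \<in> measurable \<pi> borel"
    unfolding c(5) R_def by measurable
  have "distr (distr \<pi> borel R) borel fst = distr \<pi> borel (uminus \<circ> fst)"
    by (subst distr_distr) (measurable, simp add: R_def comp_def split_beta)
  also have "\<dots> = distr \<nu> borel uminus"
    by (subst distr_distr[symmetric]) (measurable, simp add: c(3))
  finally have fst_marginal: "distr (distr \<pi> borel R) borel fst = distr \<nu> borel uminus" .
  have "distr (distr \<pi> borel R) borel snd = distr \<pi> borel (uminus \<circ> snd)"
    by (subst distr_distr) (measurable, simp add: R_def comp_def split_beta)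
  also have "\<dots> = distr \<mu> borel uminus"
    by (subst distr_distr[symmetric]) (measurable, simp add: c(4))
  finally have snd_marginal: "distr (distr \<pi> borel R) borel snd = distr \<mu> borel uminus" .
  show ?thesis
    using c fst_marginal snd_marginal unfolding R_def[symmetric]
    by (simp add: couplings_def prob_space.prob_space_distr)
qed

section \<open>The transport cost\<close>

text \<open>\<open>cost_p\<close> is \<open>w_p\<close> with \<open>deriv (I_p p)\<close> replaced by its closed form. The two agree on
  \<open>]-1, 1[\<close>, which carries the whole uniform marginal, and \<open>cost_p\<close> is evidently measurable.\<close>

definition cost_p :: "real \<Rightarrow> real \<Rightarrow> real \<Rightarrow> ennreal" where
  "cost_p p x u = ennreal (2 * \<bar>I_p_deriv p u\<bar> * (if x * ((2 * p - 1) - u) < 0 then 1 else 0))"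

lemma cost_p_measurable [measurable]:
  "(\<lambda>z. cost_p p (fst z) (snd z)) \<in> borel_measurable (borel :: (real \<times> real) measure)"
  unfolding cost_p_def by measurable

lemma cost_p_uminus: "cost_p (1 - p) (- x) (- u) = cost_p p x u"
proof -
  have "- x * ((2 * (1 - p) - 1) - - u) = x * ((2 * p - 1) - u)"
    by (simp add: algebra_simps)
  then show ?thesis
    by (simp add: cost_p_def I_p_deriv_uminus)
qed

lemma transport_cost_w_p_eq:
  assumes "0 < p" "p < 1"
  shows "transport_cost (w_p p) \<nu> unifU = (INF \<pi> \<in> couplings \<nu> unifU. \<integral>\<^sup>+z. cost_p p (fst z) (snd z) \<partial>\<pi>)"
  unfolding transport_cost_def
proof (intro INF_cong refl nn_integral_cong_AE)
  fix \<pi> assume "\<pi> \<in> couplings \<nu> unifU"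
  from AE_couplings_snd[OF this AE_unifU_interior]
  show "AE z in \<pi>. w_p p (fst z) (snd z) = cost_p p (fst z) (snd z)"
    by eventually_elim (use assms in \<open>simp add: w_p_def cost_p_def deriv_I_p\<close>)
qed

lemma monotone_coupling:
  assumes "0 \<le> q" "q \<le> 1"
  shows "distr unifU borel (\<lambda>u. (if u < 2 * q - 1 then 1 else -1, u)) \<in> couplings (mu_p q) unifU"
proof -
  define s :: "real \<Rightarrow> real" where "s u = (if u < 2 * q - 1 then 1 else -1)" for u
  have [measurable]: "s \<in> borel_measurable borel"
    unfolding s_def by measurable
  have [measurable]: "(\<lambda>u. (s u, u)) \<in> measurable unifU borel"
    unfolding measurable_cong_sets[OF sets_unifU refl] borel_prod[symmetric] by measurable
  have "distr unifU borel s = mu_p q"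
  proof (rule measure_eqI)
    fix A :: "real set" assume "A \<in> sets (distr unifU borel s)"
    then have A: "A \<in> sets borel"
      by simp
    have "s -` A = (if 1 \<in> A then {..<2 * q - 1} else {}) \<union> (if -1 \<in> A then {2 * q - 1..} else {})"
      by (auto simp: s_def split: if_splits)
    moreover have "{..<2 * q - 1} \<union> {2 * q - 1..} = UNIV"
      by auto
    moreover have "emeasure unifU UNIV = 1"
      using prob_space.emeasure_space_1[OF prob_space_unifU] by simp
    moreover have "ennreal q + ennreal (1 - q) = 1"
      using assms by (subst ennreal_plus[symmetric]) auto
    ultimately have "emeasure unifU (s -` A) = ennreal (q * indicator A 1 + (1 - q) * indicator A (-1))"
      using assms by (auto simp: emeasure_unifU_lessThan emeasure_unifU_atLeast indicator_def)
    then show "emeasure (distr unifU borel s) A = emeasure (mu_p q) A"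
      using A assms by (simp add: emeasure_distr emeasure_mu_p)
  qed simp
  then show ?thesis
    unfolding s_def[abs_def] couplings_def
    by (simp add: distr_distr comp_def prob_space.prob_space_distr[OF prob_space_unifU] distr_id2)
qed

lemma nn_integral_monotone_coupling_le:
  assumes p: "0 < p" "p < 1" and q: "0 \<le> q" "q \<le> 1"
  shows "(\<integral>\<^sup>+z. cost_p p (fst z) (snd z) \<partial>distr unifU borel (\<lambda>u. (if u < 2 * q - 1 then 1 else -1, u)))
    \<le> ennreal (I_p p (2 * q - 1))"
proof -
  define a where "a = 2 * q - 1"
  have a: "-1 \<le> a" "a \<le> 1"
    using q by (auto simp: a_def)
  have T: "(\<lambda>u. (if u < a then 1 else -1, u)) \<in> measurable unifU (borel :: (real \<times> real) measure)"
    unfolding measurable_cong_sets[OF sets_unifU refl] borel_prod[symmetric] by measurable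
  have "(\<integral>\<^sup>+z. cost_p p (fst z) (snd z) \<partial>distr unifU borel (\<lambda>u. (if u < a then 1 else -1, u)))
      = (\<integral>\<^sup>+u. cost_p p (if u < a then 1 else -1) u \<partial>unifU)"
    by (subst nn_integral_distr[OF T]) (simp_all add: cost_p_measurable)
  also have "\<dots> \<le> (\<integral>\<^sup>+u. ennreal (2 * \<bar>I_p_deriv p u\<bar>
                          * indicator {min a (2 * p - 1)..max a (2 * p - 1)} u) \<partial>unifU)"
    by (intro nn_integral_mono ennreal_leI) (auto simp: cost_p_def indicator_def)
  also have "\<dots> = ennreal (I_p p a)"
    by (rule nn_integral_unifU_abs_I_p_deriv[OF p a])
  finally show ?thesis
    by (simp add: a_def)
qed

lemma cost_p_dual_inequality:
  assumes p: "0 < p" "p < 1" and b: "-1 < b" "b \<le> 2 * p - 1"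
    and x: "x \<in> {-1, 1}" and u: "-1 < u" "u < 1"
  shows "ennreal (2 * \<bar>I_p_deriv p b\<bar> * indicator {-1} x)
      + ennreal (2 * \<bar>I_p_deriv p u\<bar> * indicator {b..2 * p - 1} u)
    \<le> cost_p p x u + ennreal (2 * \<bar>I_p_deriv p b\<bar> * indicator {b..} u)"
proof -
  define h where "h = 2 * p - 1"
  define K where "K = 2 * \<bar>I_p_deriv p b\<bar>"
  have far: "K \<le> 2 * \<bar>I_p_deriv p u\<bar>" if "u < b"
    using abs_I_p_deriv_antimono[OF p, of u b] that u b unfolding K_def by auto
  have near: "2 * \<bar>I_p_deriv p u\<bar> \<le> K" if "b \<le> u" "u \<le> h"
    using abs_I_p_deriv_antimono[OF p, of b u] that b unfolding K_def h_def by auto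
  have "K * indicator {-1} x + 2 * \<bar>I_p_deriv p u\<bar> * indicator {b..h} u
      \<le> 2 * \<bar>I_p_deriv p u\<bar> * (if x * (h - u) < 0 then 1 else 0) + K * indicator {b..} u"
    using x far near I_p_deriv_center[of p] b
    by (cases "u < b"; cases "u < h"; cases "u = h") (auto simp: indicator_def h_def K_def)
  from ennreal_leI[OF this] show ?thesis
    unfolding cost_p_def K_def h_def by simp
qed

lemma ennreal_le_of_continuous_on_right:
  fixes f :: "real \<Rightarrow> real"
  assumes "a < c" "continuous_on {a..c} f" "\<And>b. a < b \<Longrightarrow> b < c \<Longrightarrow> ennreal (f b) \<le> X"
  shows "ennreal (f a) \<le> X"
proof (rule tendsto_le[where F = "at a within {a<..<c}" and f = "\<lambda>_. X" and g = "\<lambda>b. ennreal (f b)"])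
  show "at a within {a<..<c} \<noteq> bot"
    using assms(1) by (simp add: at_within_eq_bot_iff)
  have "(f \<longlongrightarrow> f a) (at a within {a..c})"
    using assms(1,2) unfolding continuous_on_def by auto
  then have "(f \<longlongrightarrow> f a) (at a within {a<..<c})"
    by (rule tendsto_within_subset) auto
  then show "((\<lambda>b. ennreal (f b)) \<longlongrightarrow> ennreal (f a)) (at a within {a<..<c})"
    by (rule tendsto_ennrealI)
  show "\<forall>\<^sub>F b in at a within {a<..<c}. ennreal (f b) \<le> X"
    using assms(3) by (auto simp: eventually_at_filter intro!: always_eventually)
qed simp

lemma cost_p_ge_I_p:
  assumes p: "0 < p" "p < 1" and q: "0 \<le> q" and \<pi>: "\<pi> \<in> couplings (mu_p q) unifU"
    and b: "2 * q - 1 < b" "b < 2 * p - 1"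
  shows "ennreal (I_p p b) \<le> (\<integral>\<^sup>+z. cost_p p (fst z) (snd z) \<partial>\<pi>)"
proof -
  define X where "X = (\<integral>\<^sup>+z. cost_p p (fst z) (snd z) \<partial>\<pi>)"
  define K where "K = 2 * \<bar>I_p_deriv p b\<bar>"
  have K: "0 \<le> K"
    by (simp add: K_def)
  have q1: "q \<le> 1" and b1: "-1 < b" "b < 1"
    using p q b by auto
  have "(\<integral>\<^sup>+x. ennreal (K * indicator {-1} x) \<partial>mu_p q)
      + (\<integral>\<^sup>+u. ennreal (2 * \<bar>I_p_deriv p u\<bar> * indicator {b..2 * p - 1} u) \<partial>unifU)
    \<le> X + (\<integral>\<^sup>+u. ennreal (K * indicator {b..} u) \<partial>unifU)"
    unfolding X_def K_def using p q q1 b b1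
    by (intro couplings_dual_le[OF \<pi> AE_mu_p AE_unifU_interior] cost_p_dual_inequality) auto
  moreover have "(\<integral>\<^sup>+x. ennreal (K * indicator {-1} x) \<partial>mu_p q) = ennreal (K * (1 - q))"
    using q q1 K by (simp add: nn_integral_mu_p ennreal_mult)
  moreover have "(\<integral>\<^sup>+u. ennreal (2 * \<bar>I_p_deriv p u\<bar> * indicator {b..2 * p - 1} u) \<partial>unifU)
      = ennreal (I_p p b)"
    using nn_integral_unifU_abs_I_p_deriv[OF p, of b] b b1 by simp
  moreover have "(\<integral>\<^sup>+u. ennreal (K * indicator {b..} u) \<partial>unifU) = ennreal K * emeasure unifU {b..}"
    using K by (simp add: ennreal_mult ennreal_indicator nn_integral_cmult_indicator)
  moreover have "ennreal K * emeasure unifU {b..} = ennreal (K * ((1 - b) / 2))"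
    using K b1 emeasure_unifU_atLeast[of b] ennreal_mult[of K "(1 - b) / 2"] by simp
  ultimately have dual: "ennreal (K * (1 - q)) + ennreal (I_p p b) \<le> X + ennreal (K * ((1 - b) / 2))"
    by simp
  have "ennreal (K * ((1 - b) / 2)) + ennreal (I_p p b) \<le> ennreal (K * (1 - q)) + ennreal (I_p p b)"
    using K b by (intro add_right_mono ennreal_leI mult_left_mono) auto
  also have "\<dots> \<le> ennreal (K * ((1 - b) / 2)) + X"
    using dual by (simp add: add.commute)
  finally show ?thesis
    by (simp add: X_def ennreal_add_left_cancel_le)
qed

lemma cost_p_lower_bound_below_center:
  assumes p: "0 < p" "p < 1" and q: "0 \<le> q" "q \<le> p" and \<pi>: "\<pi> \<in> couplings (mu_p q) unifU"
  shows "ennreal (I_p p (2 * q - 1)) \<le> (\<integral>\<^sup>+z. cost_p p (fst z) (snd z) \<partial>\<pi>)"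
proof (cases "q = p")
  case True
  then show ?thesis
    by (simp add: I_p_center)
next
  case False
  show ?thesis
  proof (rule ennreal_le_of_continuous_on_right[where f = "I_p p" and c = "2 * p - 1"])
    show "2 * q - 1 < 2 * p - 1"
      using q False by simp
    show "continuous_on {2 * q - 1..2 * p - 1} (I_p p)"
      by (rule continuous_on_subset[OF continuous_on_I_p[OF p]]) (use p q in auto)
  qed (rule cost_p_ge_I_p[OF p q(1) \<pi>])
qed

lemma cost_p_lower_bound:
  assumes p: "0 < p" "p < 1" and q: "0 \<le> q" "q \<le> 1" and \<pi>: "\<pi> \<in> couplings (mu_p q) unifU"
  shows "ennreal (I_p p (2 * q - 1)) \<le> (\<integral>\<^sup>+z. cost_p p (fst z) (snd z) \<partial>\<pi>)"
proof (cases "q \<le> p")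
  case True
  then show ?thesis
    by (rule cost_p_lower_bound_below_center[OF p q(1) _ \<pi>])
next
  case False
  have reflect [measurable]: "(\<lambda>(x, u). (- x, - u)) \<in> measurable \<pi> (borel :: (real \<times> real) measure)"
    unfolding couplingsD(5)[OF \<pi>] by measurable
  define \<pi>' where "\<pi>' = distr \<pi> borel (\<lambda>(x, u). (- x, - u))"
  have "\<pi>' \<in> couplings (mu_p (1 - q)) unifU"
    using couplings_uminus[OF \<pi>] q by (simp add: \<pi>'_def distr_mu_p_uminus distr_unifU_uminus)
  then have "ennreal (I_p (1 - p) (2 * (1 - q) - 1)) \<le> (\<integral>\<^sup>+z. cost_p (1 - p) (fst z) (snd z) \<partial>\<pi>')"
    using p q False by (intro cost_p_lower_bound_below_center) auto
  also have "\<dots> = (\<integral>\<^sup>+z. cost_p p (fst z) (snd z) \<partial>\<pi>)"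
    unfolding \<pi>'_def using reflect
    by (subst nn_integral_distr) (measurable, simp add: cost_p_measurable, simp add: split_beta cost_p_uminus)
  also have "I_p (1 - p) (2 * (1 - q) - 1) = I_p p (2 * q - 1)"
    using I_p_uminus[of p "2 * q - 1"] by simp
  finally show ?thesis .
qed

theorem lemma3p10:
  fixes p :: real and \<nu> :: "real measure"
  assumes "0 < p" and "p < 1"
    and "prob_space \<nu>" and "sets \<nu> = sets borel" and "emeasure \<nu> {-1, 1} = 1"
  shows "transport_cost (w_p p) \<nu> unifU = ennreal (rel_entropy \<nu> (mu_p p))"
proof -
  define q where "q = measure \<nu> {1}"
  have q: "0 \<le> q" "q \<le> 1"
    using prob_space.prob_le_1[OF assms(3)] by (auto simp: q_def)
  have \<nu>: "\<nu> = mu_p q"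
    unfolding q_def using assms(3-5) by (rule measure_eq_mu_p)
  let ?W = "INF \<pi> \<in> couplings (mu_p q) unifU. \<integral>\<^sup>+z. cost_p p (fst z) (snd z) \<partial>\<pi>"
  have "transport_cost (w_p p) \<nu> unifU = ?W"
    using assms(1,2) by (simp add: \<nu> transport_cost_w_p_eq)
  also have "?W = ennreal (I_p p (2 * q - 1))"
  proof (rule antisym)
    show "?W \<le> ennreal (I_p p (2 * q - 1))"
      using assms(1,2) q by (intro INF_lower2[OF monotone_coupling] nn_integral_monotone_coupling_le)
    show "ennreal (I_p p (2 * q - 1)) \<le> ?W"
      using assms(1,2) q by (intro INF_greatest cost_p_lower_bound)
  qed
  also have "\<dots> = ennreal (rel_entropy \<nu> (mu_p p))"
    using assms(1,2) q by (simp add: \<nu> rel_entropy_mu_p)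
  finally show ?thesis .
qed

end
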